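(* For any finite simple graph $G$ on $n$ vertices with $c(G)$ connected components, $\mathrm{mur}(G)\le n-c(G)$.
   Context: For a finite simple undirected graph $G$ on vertices $v_1,\dots,v_n$, let $A_G$ be its $(0,1)$-adjacency matrix, $D_G=\mathrm{diag}(d_1,\dots,d_n)$ with $d_i$ the degree of $v_i$, $I$ the $n\times n$ identity matrix and $J$ the $n\times n$ all-ones matrix. A universal adjacency matrix of $G$ is any matrix $\alpha A_G+\beta I+\gamma J+\delta D_G$ with real scalars $\alpha,\beta,\gamma,\delta$ and $\alpha\neq 0$. The minimum universal rank $\mathrm{mur}(G)$ is the minimum rank over all universal adjacency matrices of $G$. *)

theory Defs
  imports "HOL-Analysis.Analysis"
begin

text \<open>A finite simple graph on the vertex type 'n (finite): an irreflexive symmetric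
  adjacency relation E. The vertices are all elements of 'n, so n = CARD('n).\<close>

definition simple_graph :: "('n::finite \<Rightarrow> 'n \<Rightarrow> bool) \<Rightarrow> bool" where
  "simple_graph E \<longleftrightarrow> (\<forall>x. \<not> E x x) \<and> (\<forall>x y. E x y \<longrightarrow> E y x)"

definition adj_matrix :: "('n::finite \<Rightarrow> 'n \<Rightarrow> bool) \<Rightarrow> real^'n^'n" where
  "adj_matrix E = (\<chi> i j. if E i j then 1 else 0)"

definition degree :: "('n::finite \<Rightarrow> 'n \<Rightarrow> bool) \<Rightarrow> 'n \<Rightarrow> nat" where
  "degree E v = card {u. E v u}"

definition deg_matrix :: "('n::finite \<Rightarrow> 'n \<Rightarrow> bool) \<Rightarrow> real^'n^'n" where
  "deg_matrix E = (\<chi> i j. if i = j then real (degree E i) else 0)"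

definition ones_matrix :: "real^'n^'n" where
  "ones_matrix = (\<chi> i j. 1)"

definition universal_adj :: "('n::finite \<Rightarrow> 'n \<Rightarrow> bool) \<Rightarrow> real \<Rightarrow> real \<Rightarrow> real \<Rightarrow> real \<Rightarrow> real^'n^'n" where
  "universal_adj E \<alpha> \<beta> \<gamma> \<delta> =
     \<alpha> *\<^sub>R adj_matrix E + \<beta> *\<^sub>R mat 1 + \<gamma> *\<^sub>R ones_matrix + \<delta> *\<^sub>R deg_matrix E"

definition mur :: "('n::finite \<Rightarrow> 'n \<Rightarrow> bool) \<Rightarrow> nat" where
  "mur E = Min {rank (universal_adj E \<alpha> \<beta> \<gamma> \<delta>) | \<alpha> \<beta> \<gamma> \<delta>. \<alpha> \<noteq> 0}"

definition num_components :: "('n::finite \<Rightarrow> 'n \<Rightarrow> bool) \<Rightarrow> nat" where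
  "num_components E = card (UNIV // {(x, y). E\<^sup>*\<^sup>* x y})"

end

theory Submission
  imports Defs
begin

text \<open>The Laplacian \<open>D - A\<close> is the universal adjacency matrix with \<open>\<alpha> = -1\<close>, \<open>\<delta> = 1\<close>.
  The indicator vectors of the connected components lie in its kernel and, having disjoint
  nonempty supports, are orthogonal and nonzero, hence linearly independent. The row space
  is orthogonal to the kernel, so the rank of the Laplacian is at most \<open>n - c(G)\<close>.\<close>

lemma rank_le_card_minus_card_independent_kernel:
  fixes A :: "real^'n^'m" and S :: "(real^'n) set"
  assumes indep: "independent S" and kernel: "\<And>x. x \<in> S \<Longrightarrow> A *v x = 0"
  shows "rank A \<le> CARD('n) - card S"
proof -
  have "subspace {x. A *v x = 0}"
    by (auto simp: subspace_def matrix_vector_right_distrib matrix_vector_mult_scaleR)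
  then have span_kernel: "span S \<subseteq> {x. A *v x = 0}"
    using kernel by (intro span_minimal) auto
  have "rows A \<subseteq> {y. \<forall>x\<in>span S. orthogonal x y}"
  proof (intro subsetI CollectI ballI)
    fix y x
    assume "y \<in> rows A" and "x \<in> span S"
    then show "orthogonal x y"
      using span_kernel by (intro orthogonal_nullspace_rowspace[of A] span_base) auto
  qed
  then have "rank A \<le> dim {y \<in> UNIV. \<forall>x\<in>span S. orthogonal x y}"
    unfolding row_rank_def by (simp add: dim_subset)
  also have "\<dots> = CARD('n) - card S"
    using dim_subspace_orthogonal_to_vectors[of "span S" UNIV] dim_span_eq_card_independent[OF indep]
    by simp
  finally show ?thesis .
qed

definition indicator_vec :: "'n::finite set \<Rightarrow> real^'n" where
  "indicator_vec C = (\<chi> i. if i \<in> C then 1 else 0)"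

lemma inj_indicator_vec: "inj indicator_vec"
  by (rule injI) (auto simp: indicator_vec_def vec_eq_iff split: if_splits)

lemma indicator_vec_eq_0_iff [simp]: "indicator_vec C = 0 \<longleftrightarrow> C = {}"
  by (auto simp: indicator_vec_def vec_eq_iff)

lemma independent_indicator_vec_image:
  fixes P :: "'n::finite set set"
  assumes "pairwise disjnt P" and "{} \<notin> P"
  shows "independent (indicator_vec ` P)"
proof (rule pairwise_orthogonal_independent)
  have "orthogonal (indicator_vec C) (indicator_vec C')" if "disjnt C C'" for C C' :: "'n set"
    using that by (auto simp: disjnt_def orthogonal_def inner_vec_def indicator_vec_def
        intro!: sum.neutral)
  then show "pairwise orthogonal (indicator_vec ` P)"
    unfolding pairwise_image by (blast intro: pairwise_mono[OF assms(1)])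
  show "0 \<notin> indicator_vec ` P"
    using assms(2) by (metis imageE indicator_vec_eq_0_iff)
qed

definition laplacian :: "('n::finite \<Rightarrow> 'n \<Rightarrow> bool) \<Rightarrow> real^'n^'n" where
  "laplacian E = deg_matrix E - adj_matrix E"

lemma universal_adj_laplacian: "universal_adj E (-1) 0 0 1 = laplacian E"
  by (simp add: universal_adj_def laplacian_def)

lemma laplacian_mult_vec_component:
  "(laplacian E *v x) $ i = (\<Sum>j | E i j. x $ i - x $ j)"
proof -
  have "(laplacian E *v x) $ i
      = (\<Sum>j\<in>UNIV. (if i = j then real (degree E i) else 0) * x $ j - (if E i j then 1 else 0) * x $ j)"
    by (simp add: laplacian_def deg_matrix_def adj_matrix_def matrix_vector_mult_def left_diff_distrib)
  also have "\<dots> = real (degree E i) * x $ i - (\<Sum>j | E i j. x $ j)"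
    by (simp add: sum_subtractf if_distrib[where f="\<lambda>c. c * x $ j" for j] sum.If_cases)
  also have "\<dots> = (\<Sum>j | E i j. x $ i - x $ j)"
    by (simp add: sum_subtractf degree_def)
  finally show ?thesis .
qed

lemma laplacian_mult_vec_eq_0:
  assumes "\<And>i j. E i j \<Longrightarrow> x $ i = x $ j"
  shows "laplacian E *v x = 0"
  using assms by (simp add: vec_eq_iff laplacian_mult_vec_component)

abbreviation components :: "('n \<Rightarrow> 'n \<Rightarrow> bool) \<Rightarrow> 'n set set" where
  "components E \<equiv> UNIV // {(x, y). E\<^sup>*\<^sup>* x y}"

lemma equiv_reachability:
  assumes "simple_graph E"
  shows "equiv UNIV {(x, y). E\<^sup>*\<^sup>* x y}"
proof -
  have "symp E"
    using assms by (simp add: simple_graph_def symp_def)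
  then have "symp E\<^sup>*\<^sup>*"
    by (rule symp_rtranclp)
  then show ?thesis
    unfolding equiv_def refl_on_def sym_def trans_def symp_def
    by (blast intro: rtranclp_trans)
qed

lemma component_closed_under_adjacency:
  assumes "simple_graph E" and "C \<in> components E" and "E i j"
  shows "i \<in> C \<longleftrightarrow> j \<in> C"
proof -
  obtain a where C: "C = {(x, y). E\<^sup>*\<^sup>* x y} `` {a}"
    using assms(2) by (auto elim: quotientE)
  have "E j i"
    using assms(1,3) by (simp add: simple_graph_def)
  then show ?thesis
    using assms(3) unfolding C by (auto intro: rtranclp.rtrancl_into_rtrancl)
qed

lemma laplacian_mult_indicator_component:
  assumes "simple_graph E" and "C \<in> components E"
  shows "laplacian E *v indicator_vec C = 0"
  using component_closed_under_adjacency[OF assms]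
  by (intro laplacian_mult_vec_eq_0) (simp add: indicator_vec_def)

lemma mur_le_rank_universal_adj:
  assumes "\<alpha> \<noteq> 0"
  shows "mur E \<le> rank (universal_adj E \<alpha> \<beta> \<gamma> \<delta>)"
proof -
  have fin: "finite {rank (universal_adj E \<alpha> \<beta> \<gamma> \<delta>) | \<alpha> \<beta> \<gamma> \<delta>. \<alpha> \<noteq> 0}"
    by (rule finite_subset[of _ "{..CARD('a)}"]) (auto intro: le_trans[OF rank_bound])
  show ?thesis
    unfolding mur_def using assms by (intro Min_le[OF fin]) blast
qed

theorem theorem3:
  fixes E :: "'n::finite \<Rightarrow> 'n \<Rightarrow> bool"
  assumes "simple_graph E"
  shows "mur E \<le> CARD('n) - num_components E"
proof -
  have partition: "partition_on UNIV (components E)"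
    using assms by (intro partition_on_quotient equiv_reachability)
  have "rank (laplacian E) \<le> CARD('n) - card (indicator_vec ` components E)"
  proof (rule rank_le_card_minus_card_independent_kernel)
    show "independent (indicator_vec ` components E)"
      using partition by (intro independent_indicator_vec_image) (simp_all add: partition_on_def)
    show "laplacian E *v v = 0" if "v \<in> indicator_vec ` components E" for v
      using that laplacian_mult_indicator_component[OF assms] by blast
  qed
  also have "card (indicator_vec ` components E) = num_components E"
    unfolding num_components_def by (intro card_image inj_on_subset[OF inj_indicator_vec]) simp
  finally have "rank (laplacian E) \<le> CARD('n) - num_components E" .
  moreover have "mur E \<le> rank (laplacian E)"
    using mur_le_rank_universal_adj[of "-1" E 0 0 1] by (simp add: universal_adj_laplacian)
  ultimately show ?thesis
    by simp
qed

end
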